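(* Let $\mathcal G$ be a rooted digraph, $T>0$, $r\in(0,1)^N$, $\xi\in\Xi$, and $\mathcal A:=\mathcal A_s\times\mathbb Z_{\ge0}$. If $\xi$ contains the synchronization string $\zeta$ (with respect to some root $i^*$) infinitely often, then $\mathcal H_\xi$ renders $\mathcal A$ uniformly globally stable (UGS) and globally finite-time attractive (GFTA). If $\xi$ contains $\zeta$ uniformly infinitely often, then $\mathcal H_\xi$ renders $\mathcal A$ UGS and globally fixed-time attractive (GFxTA).
   Context: $\mathcal G=(\mathcal V,\mathcal E)$ is a simple digraph on $\mathcal V=\{1,\dots,N\}$; $(i,j)\in\mathcal E$ means $j$ is an out-neighbor of $i$; $\mathcal E_i^-$ is the set of out-edges of $i$. A path is a sequence of pairwise distinct vertices with consecutive pairs in $\mathcal E$, its length the number of edges. A root is a vertex from which every other vertex is reachable; rooted means a root exists. For a root $i^*$, $\mathcal V_q(i^* )$ is the set of vertices at shortest-path distance $q$ from $i^*$ and $q^*$ the maximal distance. $\underline r=\min_ir_i$, $\ell^*:=N(\lfloor1/\underline r\rfloor+1)$. A subgraph $(\mathcal V,\mathcal E')$, $\mathcal E'\subseteq\mathcal E$, is feasible if for every $i$ either $\mathcal E_i^-\subseteq\mathcal E'$ or $\mathcal E_i^-\cap\mathcal E'=\varnothing$. $\Xi$ is the set of infinite sequences $\xi=\phi_1\phi_2\cdots$ of feasible subgraphs, $\phi_\lambda=(\mathcal V,\mathcal E_\lambda)$. With $\mathcal G_q=(\mathcal V,\bigcup_{i\in\mathcal V_q(i^* )}\mathcal E_i^-)$,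 the synchronization string w.r.t. $i^*$ is $\zeta=\mathcal G_0\cdots\mathcal G_0\cdots\mathcal G_{q^*-1}\cdots\mathcal G_{q^*-1}$, each $\mathcal G_q$ repeated consecutively $\ell^*$ times. $\xi$ contains $\zeta$ infinitely often if it has infinitely many pairwise disjoint blocks of consecutive terms equal to $\zeta$; uniformly infinitely often if there is $n\in\mathbb Z_{>0}$ such that every block of $n$ consecutive terms of $\xi$ contains $\zeta$ as a block. Hybrid system $\mathcal H_\xi$: state $x=(\tau,\lambda)\in\mathbb R^N_{\ge0}\times\mathbb Z_{\ge0}$; flow set $C=[0,1]^N\times\mathbb Z_{\ge0}$ with $\dot\tau=\frac1T\mathbf 1_N$, $\dot\lambda=0$; jump set $D=\{\tau\in[0,1]^N:\max_i\tau_i=1\}\times\mathbb Z_{\ge0}$ with $x^+\in G_{\lambda+1}(\tau)\times\{\lambda+1\}$, where $G_\lambda$ is the outer-semicontinuous hull of $G_\lambda^0(\tau)=\{g:g_i=0,\ g_j\in\mathcal R_{j,\lambda}(\tau)\ \forall j\ne i\}$, $i$ an agent with $\tau_i=1$, and $\mathcal R_{j,\lambda}(\tau)=\{0\}$, $\{0,1\}$, $\{1\}$ if $(i,j)\in\mathcal E_\lambda$ and $\tau_j<r_j$, $=r_j$, $>r_j$ respectively, and $\{\tau_j\}$ if $(i,j)\notin\mathcal E_\lambda$. Solutions are hybrid arcs on hybrid time domains (unions of $[t_k,t_{k+1}]\times\{k\}$) that flow in $C$ according to the flow map and jump from $D$ via the jump map. $\mathcal A_s:=\{\mu\mathbf 1_N:\mu\in[0,1]\}\cup\{0,1\}^N$;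 $|x|_{\mathcal A}$ is the Euclidean distance from $x$ (viewed in $\mathbb R^{N+1}$) to $\mathcal A$. $\mathcal H_\xi$ renders $\mathcal A$: UGS if there is a class-$\mathcal K_\infty$ function $\alpha$ with $|x(t,k)|_{\mathcal A}\le\alpha(|x(0,0)|_{\mathcal A})$ for every solution and all $(t,k)\in\operatorname{dom}x$; GFTA if for each solution $x$ there is $\bar T(x(0,0))>0$ with $|x(t,k)|_{\mathcal A}=0$ for all $(t,k)\in\operatorname{dom}x$ with $t+k\ge\bar T(x(0,0))$; GFxTA if it is GFTA with $\bar T$ a constant independent of $x(0,0)$. *)

theory Defs
  imports "HOL-Analysis.Analysis"
begin

text \<open>Vertices are the elements of a finite type 'n (so N = CARD('n));
  a digraph is an edge relation E; simple means no self-loops.\<close>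

definition simple_digraph :: "('n \<times> 'n) set \<Rightarrow> bool" where
  "simple_digraph E \<longleftrightarrow> (\<forall>i. (i, i) \<notin> E)"

definition out_edges :: "('n \<times> 'n) set \<Rightarrow> 'n \<Rightarrow> ('n \<times> 'n) set" where
  "out_edges E i = {e \<in> E. fst e = i}"

definition is_path :: "('n \<times> 'n) set \<Rightarrow> 'n list \<Rightarrow> bool" where
  "is_path E p \<longleftrightarrow> p \<noteq> [] \<and> distinct p \<and>
     (\<forall>k. Suc k < length p \<longrightarrow> (p ! k, p ! Suc k) \<in> E)"

definition is_root :: "('n \<times> 'n) set \<Rightarrow> 'n \<Rightarrow> bool" where
  "is_root E i \<longleftrightarrow> (\<forall>j. \<exists>p. is_path E p \<and> hd p = i \<and> last p = j)"

definition rooted :: "('n \<times> 'n) set \<Rightarrow> bool" where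
  "rooted E \<longleftrightarrow> (\<exists>i. is_root E i)"

text \<open>Shortest-path distance (path length = number of edges = length of vertex list - 1).\<close>
definition sp_dist :: "('n \<times> 'n) set \<Rightarrow> 'n \<Rightarrow> 'n \<Rightarrow> nat" where
  "sp_dist E i j = (LEAST q. \<exists>p. is_path E p \<and> hd p = i \<and> last p = j \<and> length p = Suc q)"

definition level_set :: "('n \<times> 'n) set \<Rightarrow> 'n \<Rightarrow> nat \<Rightarrow> 'n set" where
  "level_set E i q = {j. sp_dist E i j = q}"

definition max_dist :: "('n::finite \<times> 'n) set \<Rightarrow> 'n \<Rightarrow> nat" where
  "max_dist E i = Max (range (sp_dist E i))"

definition feasible :: "('n \<times> 'n) set \<Rightarrow> ('n \<times> 'n) set \<Rightarrow> bool" where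
  "feasible E E' \<longleftrightarrow> E' \<subseteq> E \<and>
     (\<forall>i. out_edges E i \<subseteq> E' \<or> out_edges E i \<inter> E' = {})"

text \<open>A sequence xi = phi_1 phi_2 ... is a map nat => edge set; only indices >= 1 are used.\<close>
definition in_Xi :: "('n \<times> 'n) set \<Rightarrow> (nat \<Rightarrow> ('n \<times> 'n) set) \<Rightarrow> bool" where
  "in_Xi E \<xi> \<longleftrightarrow> (\<forall>l\<ge>1. feasible E (\<xi> l))"

definition r_min :: "real^'n \<Rightarrow> real" where
  "r_min r = Min (range (\<lambda>i. r $ i))"

definition ell_star :: "real^'n \<Rightarrow> nat" where
  "ell_star r = CARD('n) * (nat \<lfloor>1 / r_min r\<rfloor> + 1)"

definition level_graph :: "('n \<times> 'n) set \<Rightarrow> 'n \<Rightarrow> nat \<Rightarrow> ('n \<times> 'n) set" where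
  "level_graph E i q = (\<Union>j\<in>level_set E i q. out_edges E j)"

definition sync_string :: "('n::finite \<times> 'n) set \<Rightarrow> real^'n \<Rightarrow> 'n \<Rightarrow> ('n \<times> 'n) set list" where
  "sync_string E r i =
     concat (map (\<lambda>q. replicate (ell_star r) (level_graph E i q)) [0..<max_dist E i])"

definition occurs_at :: "(nat \<Rightarrow> 'a) \<Rightarrow> 'a list \<Rightarrow> nat \<Rightarrow> bool" where
  "occurs_at \<xi> z s \<longleftrightarrow> s \<ge> 1 \<and> (\<forall>k < length z. \<xi> (s + k) = z ! k)"

definition contains_inf_often :: "(nat \<Rightarrow> 'a) \<Rightarrow> 'a list \<Rightarrow> bool" where
  "contains_inf_often \<xi> z \<longleftrightarrow> (\<exists>S. infinite S \<and> (\<forall>s\<in>S. occurs_at \<xi> z s) \<and>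
     (\<forall>s\<in>S. \<forall>s'\<in>S. s \<noteq> s' \<longrightarrow> {s..<s + length z} \<inter> {s'..<s' + length z} = {}))"

definition contains_unif_inf_often :: "(nat \<Rightarrow> 'a) \<Rightarrow> 'a list \<Rightarrow> bool" where
  "contains_unif_inf_often \<xi> z \<longleftrightarrow> (\<exists>n::nat. n > 0 \<and>
     (\<forall>s\<ge>1. \<exists>s'. s \<le> s' \<and> s' + length z \<le> s + n \<and> occurs_at \<xi> z s'))"

definition C_set :: "((real^'n) \<times> nat) set" where
  "C_set = {(\<tau>, l). \<forall>i. 0 \<le> \<tau> $ i \<and> \<tau> $ i \<le> 1}"

definition D_tau :: "(real^'n::finite) set" where
  "D_tau = {\<tau>. (\<forall>i. 0 \<le> \<tau> $ i \<and> \<tau> $ i \<le> 1) \<and> Max (range (\<lambda>i. \<tau> $ i)) = 1}"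

definition D_set :: "((real^'n::finite) \<times> nat) set" where
  "D_set = D_tau \<times> UNIV"

definition R_set :: "('n \<times> 'n) set \<Rightarrow> real^'n \<Rightarrow> 'n \<Rightarrow> real^'n \<Rightarrow> 'n \<Rightarrow> real set" where
  "R_set El r i \<tau> j =
     (if (i, j) \<in> El then
        (if \<tau> $ j < r $ j then {0} else if \<tau> $ j = r $ j then {0, 1} else {1})
      else {\<tau> $ j})"

definition G0 :: "('n \<times> 'n) set \<Rightarrow> real^'n \<Rightarrow> real^'n \<Rightarrow> (real^'n) set" where
  "G0 El r \<tau> = {g. \<exists>i. \<tau> $ i = 1 \<and> g $ i = 0 \<and> (\<forall>j. j \<noteq> i \<longrightarrow> g $ j \<in> R_set El r i \<tau> j)}"

text \<open>Outer-semicontinuous hull: the set-valued map whose graph is the closure of the graph of G0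
  (G0 considered on the jump set D).\<close>
definition G_hull :: "('n::finite \<times> 'n) set \<Rightarrow> real^'n \<Rightarrow> real^'n \<Rightarrow> (real^'n) set" where
  "G_hull El r \<tau> = {g. (\<tau>, g) \<in> closure {(\<sigma>, h). \<sigma> \<in> D_tau \<and> h \<in> G0 El r \<sigma>}}"

definition compact_htd :: "(real \<times> nat) set \<Rightarrow> bool" where
  "compact_htd S \<longleftrightarrow> (\<exists>J (t::nat \<Rightarrow> real). t 0 = 0 \<and> (\<forall>j\<le>J. t j \<le> t (Suc j)) \<and>
       S = (\<Union>j\<in>{0..J}. {t j..t (Suc j)} \<times> {j}))"

definition hybrid_time_domain :: "(real \<times> nat) set \<Rightarrow> bool" where
  "hybrid_time_domain S \<longleftrightarrow> S \<subseteq> {0..} \<times> UNIV \<and>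
     (\<forall>T J. (T, J) \<in> S \<longrightarrow> compact_htd (S \<inter> ({0..T} \<times> {0..J})))"

text \<open>Since the flow map is the constant vector (1/T) 1_N for tau and 0 for lambda, the
  (locally absolutely continuous) flow condition is written as: on each interval
  I^j = {t. (t,j) in hdom} tau is continuous with derivative (1/T) 1_N at every interior point,
  lambda is constant, and the state lies in C on the interior of I^j.\<close>
definition is_solution ::
  "real \<Rightarrow> (nat \<Rightarrow> ('n::finite \<times> 'n) set) \<Rightarrow> real^'n \<Rightarrow>
   (real \<times> nat) set \<Rightarrow> (real \<times> nat \<Rightarrow> (real^'n) \<times> nat) \<Rightarrow> bool" where
  "is_solution Tp \<xi> r hdom x \<longleftrightarrow>
     hdom \<noteq> {} \<and> hybrid_time_domain hdom \<and>
     x (0, 0) \<in> closure C_set \<union> D_set \<and>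
     (\<forall>j. let I = {t. (t, j) \<in> hdom} in
        continuous_on I (\<lambda>t. fst (x (t, j))) \<and>
        (\<forall>t\<in>I. \<forall>t'\<in>I. snd (x (t, j)) = snd (x (t', j))) \<and>
        (\<forall>t\<in>interior I. x (t, j) \<in> C_set \<and>
           ((\<lambda>s. fst (x (s, j))) has_vector_derivative ((\<chi> i. 1 / Tp) :: real^'n)) (at t))) \<and>
     (\<forall>t j. (t, j) \<in> hdom \<and> (t, Suc j) \<in> hdom \<longrightarrow>
        x (t, j) \<in> D_set \<and>
        fst (x (t, Suc j)) \<in> G_hull (\<xi> (Suc (snd (x (t, j))))) r (fst (x (t, j))) \<and>
        snd (x (t, Suc j)) = Suc (snd (x (t, j))))"

definition A_s :: "(real^'n) set" where
  "A_s = {(\<chi> i. \<mu>) | \<mu>. 0 \<le> \<mu> \<and> \<mu> \<le> 1} \<union> {v. \<forall>i. v $ i \<in> {0, 1}}"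

text \<open>A = A_s x Z_{>=0}, viewed as a subset of R^{N+1} = R^N x R.\<close>
definition A_set :: "((real^'n) \<times> real) set" where
  "A_set = {(v, real k) | v k. v \<in> A_s}"

definition dist_A :: "(real^'n) \<times> nat \<Rightarrow> real" where
  "dist_A z = infdist (fst z, real (snd z)) A_set"

definition class_K_inf :: "(real \<Rightarrow> real) \<Rightarrow> bool" where
  "class_K_inf \<alpha> \<longleftrightarrow> continuous_on {0..} \<alpha> \<and> \<alpha> 0 = 0 \<and> strict_mono_on {0..} \<alpha> \<and>
     filterlim \<alpha> at_top at_top"

definition UGS :: "real \<Rightarrow> (nat \<Rightarrow> ('n::finite \<times> 'n) set) \<Rightarrow> real^'n \<Rightarrow> bool" where
  "UGS Tp \<xi> r \<longleftrightarrow> (\<exists>\<alpha>. class_K_inf \<alpha> \<and>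
     (\<forall>hdom x. is_solution Tp \<xi> r hdom x \<longrightarrow>
        (\<forall>(t, k)\<in>hdom. dist_A (x (t, k)) \<le> \<alpha> (dist_A (x (0, 0))))))"

definition GFTA :: "real \<Rightarrow> (nat \<Rightarrow> ('n::finite \<times> 'n) set) \<Rightarrow> real^'n \<Rightarrow> bool" where
  "GFTA Tp \<xi> r \<longleftrightarrow> (\<exists>Tbar :: (real^'n) \<times> nat \<Rightarrow> real.
     \<forall>hdom x. is_solution Tp \<xi> r hdom x \<longrightarrow> Tbar (x (0, 0)) > 0 \<and>
        (\<forall>(t, k)\<in>hdom. t + real k \<ge> Tbar (x (0, 0)) \<longrightarrow> dist_A (x (t, k)) = 0))"

definition GFxTA :: "real \<Rightarrow> (nat \<Rightarrow> ('n::finite \<times> 'n) set) \<Rightarrow> real^'n \<Rightarrow> bool" where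
  "GFxTA Tp \<xi> r \<longleftrightarrow> (\<exists>Tbar :: real. Tbar > 0 \<and>
     (\<forall>hdom x. is_solution Tp \<xi> r hdom x \<longrightarrow>
        (\<forall>(t, k)\<in>hdom. t + real k \<ge> Tbar \<longrightarrow> dist_A (x (t, k)) = 0)))"

end

theory Submission
  imports Defs
begin

(* Phases are compared on the circle R/Z, on which the reset value 0 and the firing threshold 1
   coincide. Flowing shifts all phases equally, and a jump cannot increase the phase spread of a
   set of agents unless the firing agent lies outside the set and resets one of its members; as the
   spread of all agents bounds the distance to A from above and below, this gives UGS with a linear
   class-K_inf bound.

   For attractivity, suppose the agents at distance at most q from the root are in phase at the
   start of a block of ell_star consecutive jumps during which only the out-edges of the agents at
   distance exactly q are active. An agent of this set that never fired during the block would keep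
   its phase, so the block would last at most one period, every agent could fire at most
   floor (1 / r_min) + 1 times, and ell_star jumps could not all happen. So every agent of the set
   fires, and when it does, it resets its out-neighbours into phase with it. After the last block of
   the synchronization string all agents are in phase, i.e. the state lies in A, and it stays there.
   The number of jumps until the end of the next occurrence of the string bounds the settling time;
   under uniform recurrence it is independent of the initial state. *)

section \<open>Phases on the circle\<close>

lemma mem_unit_cube_iff: "\<tau> \<in> cbox 0 1 \<longleftrightarrow> (\<forall>i. 0 \<le> \<tau>$i \<and> \<tau>$i \<le> (1::real))"
  by (simp add: mem_box_cart)

definition phase_dist :: "real \<Rightarrow> real \<Rightarrow> real" where
  "phase_dist a b = min \<bar>a - b\<bar> (1 - \<bar>a - b\<bar>)"

lemma phase_dist_self [simp]: "phase_dist a a = 0"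
  by (simp add: phase_dist_def)

lemma phase_dist_commute: "phase_dist a b = phase_dist b a"
  by (simp add: phase_dist_def abs_minus_commute)

lemma phase_dist_le_0_iff:
  "0 \<le> a \<Longrightarrow> a \<le> 1 \<Longrightarrow> 0 \<le> b \<Longrightarrow> b \<le> 1 \<Longrightarrow> phase_dist a b \<le> 0 \<longleftrightarrow> a = b \<or> \<bar>a - b\<bar> = 1"
  by (auto simp: phase_dist_def min_def)

lemma phase_dist_end_points:
  "v \<in> {0, 1} \<Longrightarrow> 0 \<le> x \<Longrightarrow> x \<le> 1 \<Longrightarrow> phase_dist v x = phase_dist 1 x"
  by (auto simp: phase_dist_def)

lemma phase_dist_le_0_trans:
  assumes "0 \<le> a" "a \<le> 1" "0 \<le> b" "b \<le> 1" "0 \<le> c" "c \<le> 1"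
    and "phase_dist a c \<le> 0" "phase_dist b c \<le> 0"
  shows "phase_dist a b \<le> 0"
  using assms by (auto simp: phase_dist_le_0_iff)

definition synced_on :: "'n set \<Rightarrow> real \<Rightarrow> real^'n \<Rightarrow> bool" where
  "synced_on Y c \<tau> \<longleftrightarrow> (\<forall>a\<in>Y. \<forall>b\<in>Y. phase_dist (\<tau>$a) (\<tau>$b) \<le> c)"

lemma synced_on_subset: "Y' \<subseteq> Y \<Longrightarrow> synced_on Y c \<tau> \<Longrightarrow> synced_on Y' c \<tau>"
  by (auto simp: synced_on_def)

lemma synced_on_shift: "synced_on Y c \<tau> \<Longrightarrow> synced_on Y c (\<tau> + (\<chi> _. d))"
  by (simp add: synced_on_def phase_dist_def)

lemma synced_on_end_points:
  assumes "\<And>j. j \<in> Y \<Longrightarrow> \<tau>$j \<in> {0, 1}"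
  shows "synced_on Y 0 \<tau>"
  unfolding synced_on_def
proof (intro ballI)
  fix a b assume "a \<in> Y" "b \<in> Y"
  with assms have "\<tau>$a \<in> {0, 1}" "\<tau>$b \<in> {0, 1}"
    by blast+
  then show "phase_dist (\<tau>$a) (\<tau>$b) \<le> 0"
    by (auto simp: phase_dist_def)
qed

lemma synced_on_0_if_in_phase:
  assumes "\<tau> \<in> cbox 0 1" "\<And>a. a \<in> Y \<Longrightarrow> phase_dist (\<tau>$a) (\<tau>$w) \<le> 0"
  shows "synced_on Y 0 \<tau>"
  using assms phase_dist_le_0_trans unfolding synced_on_def mem_unit_cube_iff by blast

section \<open>The jump map\<close>

definition fire_jump :: "('n \<times> 'n) set \<Rightarrow> real^'n \<Rightarrow> 'n \<Rightarrow> real^'n \<Rightarrow> real^'n \<Rightarrow> bool" where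
  "fire_jump El r i \<tau> g \<longleftrightarrow> \<tau>$i = 1 \<and> g$i = 0 \<and> (\<forall>j. j \<noteq> i \<longrightarrow> g$j \<in> R_set El r i \<tau> j)"

lemma mem_R_set_iff:
  "g \<in> R_set El r i \<tau> j \<longleftrightarrow>
    (if (i, j) \<in> El then (\<tau>$j \<le> r$j \<and> g = 0) \<or> (r$j \<le> \<tau>$j \<and> g = 1) else g = \<tau>$j)"
  by (auto simp: R_set_def)

lemma mem_G0_iff: "g \<in> G0 El r \<tau> \<longleftrightarrow> (\<exists>i. fire_jump El r i \<tau> g)"
  by (simp add: G0_def fire_jump_def)

lemma mem_D_tau_iff: "\<tau> \<in> D_tau \<longleftrightarrow> \<tau> \<in> cbox 0 1 \<and> (\<exists>i. \<tau>$i = 1)"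
proof -
  have "Max (range (\<lambda>i. \<tau>$i)) \<in> range (\<lambda>i. \<tau>$i)"
    by (rule Max_in) auto
  then obtain m where m: "Max (range (\<lambda>i. \<tau>$i)) = \<tau>$m"
    by blast
  moreover have "Max (range (\<lambda>i. \<tau>$i)) = 1" if "\<tau> \<in> cbox 0 1" "\<tau>$i = 1" for i
    using that by (intro Max_eqI) (auto simp: mem_unit_cube_iff)
  ultimately show ?thesis
    unfolding D_tau_def mem_unit_cube_iff by auto
qed

lemma fire_jump_kept_or_reset:
  assumes "fire_jump El r i \<tau> g"
  shows "g$j = \<tau>$j \<or> (g$j \<in> {0, 1} \<and> (j = i \<or> (i, j) \<in> El))"
proof (cases "j = i")
  case False
  then have "g$j \<in> R_set El r i \<tau> j"
    using assms by (simp add: fire_jump_def)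
  then show ?thesis
    by (auto simp: mem_R_set_iff split: if_splits)
qed (use assms in \<open>simp add: fire_jump_def\<close>)

lemma fire_jump_unit_cube:
  assumes "\<tau> \<in> cbox 0 1" "fire_jump El r i \<tau> g"
  shows "g \<in> cbox 0 1"
  unfolding mem_unit_cube_iff
proof
  fix j
  show "0 \<le> g$j \<and> g$j \<le> 1"
    using assms(1) fire_jump_kept_or_reset[OF assms(2), of j] by (auto simp: mem_unit_cube_iff)
qed

lemma closed_graph_G0:
  fixes El :: "('n::finite \<times> 'n) set"
  shows "closed {(\<sigma>, h). \<sigma> \<in> D_tau \<and> h \<in> G0 El r \<sigma>}"
proof -
  define jump_cond where "jump_cond i j p \<longleftrightarrow>
      0 \<le> fst p $ j \<and> fst p $ j \<le> 1 \<and> (j = i \<longrightarrow> fst p $ j = 1 \<and> snd p $ j = 0) \<and>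
      (j \<noteq> i \<longrightarrow> snd p $ j \<in> R_set El r i (fst p) j)"
    for i j and p :: "(real^'n) \<times> (real^'n)"
  have "{(\<sigma>, h). \<sigma> \<in> D_tau \<and> h \<in> G0 El r \<sigma>} = (\<Union>i. {p. \<forall>j. jump_cond i j p})"
    by (auto simp: jump_cond_def all_conj_distrib mem_D_tau_iff mem_unit_cube_iff mem_G0_iff
        fire_jump_def)
  moreover have "closed {p. jump_cond i j p}" for i j
    unfolding jump_cond_def mem_R_set_iff if_bool_eq_conj
    by (intro closed_Collect_conj closed_Collect_imp open_Collect_const closed_Collect_disj
        closed_Collect_le closed_Collect_eq continuous_intros)
  ultimately show ?thesis
    by (simp add: closed_Collect_all closed_UN)
qed

lemma G_hull_eq: "G_hull El r \<tau> = {g. \<tau> \<in> D_tau \<and> g \<in> G0 El r \<tau>}"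
  using closure_closed[OF closed_graph_G0[of El r]] by (simp add: G_hull_def)

lemma synced_on_fire_jump:
  assumes cube: "\<tau> \<in> cbox 0 1" and jump: "fire_jump El r i \<tau> g" and synced: "synced_on Y c \<tau>"
    and closed: "\<And>j. j \<in> Y \<Longrightarrow> (i, j) \<in> El \<Longrightarrow> i \<in> Y"
  shows "synced_on Y c g"
  unfolding synced_on_def
proof (intro ballI)
  have phase: "0 \<le> \<tau>$j" "\<tau>$j \<le> 1" for j
    using cube by (auto simp: mem_unit_cube_iff)
  have "\<tau>$i = 1"
    using jump by (simp add: fire_jump_def)
  have kept_or_reset: "g$j = \<tau>$j \<or> (g$j \<in> {0, 1} \<and> i \<in> Y)" if "j \<in> Y" for j
    using fire_jump_kept_or_reset[OF jump, of j] closed[OF that] that by blast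
  fix a b assume a: "a \<in> Y" and b: "b \<in> Y"
  have "phase_dist (\<tau>$a) (\<tau>$a) \<le> c"
    using synced a unfolding synced_on_def by blast
  then have "0 \<le> c"
    by simp
  \<comment> \<open>A reset agent lands on 0 or 1, which is in phase with the firing agent i, at 1.\<close>
  from kept_or_reset[OF a] kept_or_reset[OF b]
  show "phase_dist (g$a) (g$b) \<le> c"
  proof (elim disjE conjE)
    assume "g$a = \<tau>$a" "g$b = \<tau>$b"
    then show ?thesis
      using synced a b by (simp add: synced_on_def)
  next
    assume "g$a = \<tau>$a" "g$b \<in> {0, 1}" "i \<in> Y"
    then have "phase_dist (g$a) (g$b) = phase_dist (\<tau>$a) (\<tau>$i)"
      using phase_dist_end_points[OF \<open>g$b \<in> {0, 1}\<close> phase[of a]] \<open>\<tau>$i = 1\<close>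
      by (metis phase_dist_commute)
    then show ?thesis
      using synced a \<open>i \<in> Y\<close> by (simp add: synced_on_def)
  next
    assume "g$a \<in> {0, 1}" "g$b = \<tau>$b" "i \<in> Y"
    then have "phase_dist (g$a) (g$b) = phase_dist (\<tau>$i) (\<tau>$b)"
      using phase_dist_end_points[OF \<open>g$a \<in> {0, 1}\<close> phase[of b]] \<open>\<tau>$i = 1\<close> by simp
    then show ?thesis
      using synced b \<open>i \<in> Y\<close> by (simp add: synced_on_def)
  next
    assume "g$a \<in> {0, 1}" "g$b \<in> {0, 1}"
    then show ?thesis
      using \<open>0 \<le> c\<close> by (auto simp: phase_dist_def)
  qed
qed

lemma fire_jump_keeps_in_phase:
  assumes jump: "fire_jump El r i \<tau> g" and cube: "\<tau> \<in> cbox 0 1" and synced: "synced_on X 0 \<tau>"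
    and "Domain El \<subseteq> X" "u \<in> X" "u \<noteq> i" "0 < r$u" "r$u < 1"
  shows "g$u = \<tau>$u"
proof -
  have R: "g$u \<in> R_set El r i \<tau> u"
    using jump \<open>u \<noteq> i\<close> by (simp add: fire_jump_def)
  show ?thesis
  proof (cases "(i, u) \<in> El")
    case True
    then have "i \<in> X"
      using \<open>Domain El \<subseteq> X\<close> by blast
    then have "phase_dist (\<tau>$u) (\<tau>$i) \<le> 0"
      using synced \<open>u \<in> X\<close> by (simp add: synced_on_def)
    moreover have "\<tau>$i = 1"
      using jump by (simp add: fire_jump_def)
    ultimately have "\<tau>$u = 0 \<or> \<tau>$u = 1"
      using cube phase_dist_le_0_iff[of "\<tau>$u" 1] by (auto simp: mem_unit_cube_iff)
    then show ?thesis
      using R True assms(7,8) by (auto simp: mem_R_set_iff)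
  next
    case False
    then show ?thesis
      using R by (simp add: mem_R_set_iff)
  qed
qed

lemma fire_jump_potential:
  assumes "fire_jump El r i \<tau> g" "0 \<le> \<tau>$v" "0 < r$v" "r$v \<le> 1"
  shows "min (g$v) (r$v) + (if i = v then r$v else 0) \<le> min (\<tau>$v) (r$v)"
proof (cases "i = v")
  case False
  then have "g$v \<in> R_set El r i \<tau> v"
    using assms(1) by (simp add: fire_jump_def)
  then show ?thesis
    using False assms(2,3) by (auto simp: mem_R_set_iff min_def split: if_splits)
qed (use assms in \<open>simp add: fire_jump_def\<close>)

lemma fire_jump_resets_in_phase:
  assumes jump: "fire_jump El r i \<tau> g" and cube: "\<tau> \<in> cbox 0 1" and synced: "synced_on X 0 \<tau>"
    and "i \<in> X" "j \<in> X \<union> El `` {i}"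
  shows "g$j \<in> {0, 1}"
proof (cases "j = i \<or> (i, j) \<in> El")
  case True
  then show ?thesis
    using jump by (auto simp: fire_jump_def mem_R_set_iff)
next
  case False
  then have "j \<in> X" "g$j = \<tau>$j"
    using jump \<open>j \<in> X \<union> El `` {i}\<close> by (auto simp: fire_jump_def mem_R_set_iff)
  moreover have "phase_dist (\<tau>$j) (\<tau>$i) \<le> 0"
    using synced \<open>j \<in> X\<close> \<open>i \<in> X\<close> unfolding synced_on_def by blast
  moreover have "\<tau>$i = 1"
    using jump by (simp add: fire_jump_def)
  ultimately show ?thesis
    using cube phase_dist_le_0_iff[of "\<tau>$j" 1] by (auto simp: mem_unit_cube_iff)
qed

section \<open>Distance to the synchronization set\<close>

lemma dist_A_le_norm:
  assumes "a \<in> A_s"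
  shows "dist_A (\<tau>, k) \<le> norm (\<tau> - a)"
proof -
  have "(a, real k) \<in> A_set"
    using assms by (auto simp: A_set_def)
  then have "dist_A (\<tau>, k) \<le> dist (\<tau>, real k) (a, real k)"
    unfolding dist_A_def by (simp add: infdist_le)
  then show ?thesis
    by (simp add: dist_Pair_Pair dist_norm)
qed

lemma phase_dist_le_norm_A_s:
  assumes "a \<in> A_s"
  shows "phase_dist (\<tau>$i) (\<tau>$j) \<le> 2 * norm (\<tau> - a)"
proof -
  have "\<bar>\<tau>$i - a$i\<bar> \<le> norm (\<tau> - a)" "\<bar>\<tau>$j - a$j\<bar> \<le> norm (\<tau> - a)"
    using component_le_norm_cart[of "\<tau> - a"] by auto
  moreover have "a$i = a$j \<or> \<bar>a$i - a$j\<bar> = 1"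
  proof -
    consider \<mu> where "a = (\<chi> _. \<mu>)" | "a$i \<in> {0, 1}" "a$j \<in> {0, 1}"
      using assms unfolding A_s_def by blast
    then show ?thesis
      by cases auto
  qed
  ultimately show ?thesis
    by (auto simp: phase_dist_def min_def abs_if split: if_splits)
qed

lemma synced_on_dist_A:
  fixes \<tau> :: "real^'n::finite"
  shows "synced_on UNIV (2 * dist_A (\<tau>, k)) \<tau>"
  unfolding synced_on_def
proof (intro ballI)
  fix i j
  have "(0, real 0) \<in> A_set"
    by (force simp: A_set_def A_s_def)
  then have nonempty: "A_set \<noteq> {}"
    by blast
  have "phase_dist (\<tau>$i) (\<tau>$j) / 2 \<le> dist_A (\<tau>, k)"
    unfolding dist_A_def infdist_notempty[OF nonempty]
  proof (rule cINF_greatest[OF nonempty])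
    fix z :: "(real^'n) \<times> real"
    assume "z \<in> A_set"
    then obtain a k' where z: "z = (a, real k')" and "a \<in> A_s"
      by (auto simp: A_set_def)
    then have "phase_dist (\<tau>$i) (\<tau>$j) \<le> 2 * dist \<tau> a"
      using phase_dist_le_norm_A_s by (simp add: dist_norm)
    also have "dist \<tau> a \<le> dist (\<tau>, real k) z"
      using dist_fst_le[of "(\<tau>, real k)" z] by (simp add: z)
    finally show "phase_dist (\<tau>$i) (\<tau>$j) / 2 \<le> dist (fst (\<tau>, k), real (snd (\<tau>, k))) z"
      by simp
  qed
  then show "phase_dist (\<tau>$i) (\<tau>$j) \<le> 2 * dist_A (\<tau>, k)"
    by simp
qed

lemma dist_A_le_synced_on:
  fixes \<tau> :: "real^'n::finite" and c :: real
  assumes cube: "\<tau> \<in> cbox 0 1" and synced: "synced_on UNIV c \<tau>"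
  shows "dist_A (\<tau>, k) \<le> 2 * CARD('n) * c"
proof -
  define p where "p = \<tau> $ undefined"
  have p: "0 \<le> p" "p \<le> 1" and \<tau>: "\<And>j. 0 \<le> \<tau>$j \<and> \<tau>$j \<le> 1"
    using cube by (auto simp: mem_unit_cube_iff p_def)
  have close: "phase_dist (\<tau>$j) p \<le> c" for j
    using synced by (simp add: synced_on_def p_def)
  \<comment> \<open>All phases lie within c of p on the circle; round them to the nearest point of A_s.\<close>
  obtain a where "a \<in> A_s" and a: "\<And>j. \<bar>\<tau>$j - a$j\<bar> \<le> 2 * c"
  proof (cases "c < p \<and> p < 1 - c")
    case True
    have "(\<chi> j. p) \<in> A_s"
      using p by (auto simp: A_s_def)
    moreover have "\<bar>\<tau>$j - p\<bar> \<le> 2 * c" for j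
      using close[of j] \<tau>[of j] p True by (auto simp: phase_dist_def min_def split: if_splits)
    ultimately show ?thesis
      using that by fastforce
  next
    case False
    define a :: "real^'n" where "a = (\<chi> j. if \<bar>\<tau>$j - p\<bar> \<le> c \<longleftrightarrow> p \<le> c then 0 else 1)"
    have "a \<in> A_s"
      by (auto simp: A_s_def a_def)
    moreover have "\<bar>\<tau>$j - a$j\<bar> \<le> 2 * c" for j
      using close[of j] \<tau>[of j] p False
      by (auto simp: a_def phase_dist_def min_def abs_if split: if_splits)
    ultimately show ?thesis
      using that by blast
  qed
  have "dist_A (\<tau>, k) \<le> norm (\<tau> - a)"
    using \<open>a \<in> A_s\<close> by (rule dist_A_le_norm)
  also have "\<dots> \<le> (\<Sum>j\<in>UNIV. \<bar>(\<tau> - a)$j\<bar>)"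
    by (rule norm_le_l1_cart)
  also have "\<dots> \<le> (\<Sum>j\<in>(UNIV::'n set). 2 * c)"
    using a by (intro sum_mono) simp
  finally show ?thesis
    by simp
qed

section \<open>Jump chains\<close>

lemma r_min_le: "r_min (r::real^'n::finite) \<le> r$v"
  unfolding r_min_def by (rule Min_le) auto

lemma r_min_pos:
  assumes "\<forall>i. 0 < (r::real^'n::finite)$i"
  shows "0 < r_min r"
proof -
  have "r_min r \<in> range (\<lambda>i. r$i)"
    unfolding r_min_def by (rule Min_in) auto
  then show ?thesis
    using assms by auto
qed

lemma count_le_floor_inverse:
  fixes F :: nat and x y :: real
  assumes "real F * x - x \<le> 1" "0 < y" "y \<le> x"
  shows "F \<le> nat \<lfloor>1 / y\<rfloor> + 1"
proof -
  have "(real F - 1) * x \<le> 1"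
    using assms(1) by (simp add: algebra_simps)
  then have "real F - 1 \<le> 1 / x"
    using assms by (simp add: pos_le_divide_eq)
  also have "\<dots> \<le> 1 / y"
    using assms by (simp add: frac_le)
  finally have "int F - 1 \<le> \<lfloor>1 / y\<rfloor>"
    by (simp add: le_floor_iff)
  then show ?thesis
    by linarith
qed

text \<open>A solution sampled at its jump times: the j-th flow interval leads from s j to e j and lasts
  d j units of Tp; at its end agent f j fires, with the graph Gs j.\<close>
locale jump_chain =
  fixes Gs :: "nat \<Rightarrow> ('n::finite \<times> 'n) set" and r :: "real^'n" and K :: nat
    and f :: "nat \<Rightarrow> 'n" and s e :: "nat \<Rightarrow> real^'n" and d :: "nat \<Rightarrow> real"
  assumes start_cube: "s 0 \<in> cbox 0 1"
    and flow_nonneg: "j \<le> K \<Longrightarrow> 0 \<le> d j"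
    and flow_end: "j \<le> K \<Longrightarrow> e j = s j + (\<chi> _. d j)"
    and end_cube: "j \<le> K \<Longrightarrow> e j \<in> cbox 0 1"
    and jump: "j < K \<Longrightarrow> fire_jump (Gs j) r (f j) (e j) (s (Suc j))"
begin

lemma flow_end_nth: "j \<le> K \<Longrightarrow> e j $ v = s j $ v + d j"
  by (simp add: flow_end)

lemma state_cube: "j \<le> K \<Longrightarrow> s j \<in> cbox 0 1"
  by (cases j) (auto simp: start_cube intro: fire_jump_unit_cube[OF end_cube jump])

lemma flow_le_one:
  assumes "j \<le> K"
  shows "d j \<le> 1"
proof -
  have bounds: "0 \<le> s j $ v" "e j $ v \<le> 1" "e j $ v = s j $ v + d j" for v
    using state_cube[OF assms] end_cube[OF assms] flow_end_nth[OF assms]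
    by (simp_all add: mem_unit_cube_iff)
  show ?thesis
    using bounds[of undefined] by linarith
qed

lemma synced_on_flow_end: "j \<le> K \<Longrightarrow> synced_on Y c (s j) \<Longrightarrow> synced_on Y c (e j)"
  by (simp add: flow_end synced_on_shift)

lemma synced_on_add:
  assumes "m + n \<le> K" "synced_on Y c (s m)"
    and "\<And>k. m \<le> k \<Longrightarrow> k < m + n \<Longrightarrow> (Gs k)\<inverse> `` Y \<subseteq> Y"
  shows "synced_on Y c (s (m + n))"
  using assms
proof (induction n)
  case (Suc n)
  have "(Gs (m + n))\<inverse> `` Y \<subseteq> Y"
    using Suc.prems(3)[of "m + n"] by simp
  then have "f (m + n) \<in> Y" if "j \<in> Y" "(f (m + n), j) \<in> Gs (m + n)" for j
    using that by blast
  moreover have "synced_on Y c (e (m + n))"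
    using Suc by (simp add: synced_on_flow_end)
  ultimately show ?case
    using Suc.prems synced_on_fire_jump[OF end_cube jump] by simp
qed simp

lemma synced_on_UNIV_flow_end:
  assumes "m \<le> k" "k \<le> K" "synced_on UNIV c (s m)"
  shows "synced_on UNIV c (e k)"
  using synced_on_add[of m "k - m" UNIV c] synced_on_flow_end[of k UNIV c] assms by simp

lemma phase_without_reset:
  assumes "m + n \<le> K" and kept: "\<And>k. m \<le> k \<Longrightarrow> k < m + n \<Longrightarrow> s (Suc k) $ u = e k $ u"
  shows "s (m + n) $ u = s m $ u + (\<Sum>k = m..<m + n. d k)"
  using assms
proof (induction n)
  case (Suc n)
  have "s (m + Suc n) $ u = e (m + n) $ u"
    using Suc.prems(2)[of "m + n"] by simp
  also have "\<dots> = s (m + n) $ u + d (m + n)"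
    using Suc.prems(1) by (simp add: flow_end_nth)
  finally show ?case
    using Suc by simp
qed simp

text \<open>The potential min (phase of v) (r v) never grows faster than the flow, never increases at a
  jump, and drops from r v to 0 whenever v fires.\<close>
lemma firing_potential_le:
  assumes "m + n \<le> K" and r_pos: "0 < r$v" and "r$v \<le> 1"
  shows "real (card {k \<in> {m..<m + n}. f k = v}) * r$v + min (s (m + n) $ v) (r$v) - r$v
           \<le> (\<Sum>k = m..<m + n. d k)"
  using assms(1)
proof (induction n)
  case (Suc n)
  let ?k = "m + n"
  have "?k < K"
    using Suc.prems by simp
  have "{k \<in> {m..<m + Suc n}. f k = v} = {k \<in> {m..<?k}. f k = v} \<union> (if f ?k = v then {?k} else {})"
    by (auto simp: less_Suc_eq)
  then have card_Suc:
    "real (card {k \<in> {m..<m + Suc n}. f k = v}) =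
      real (card {k \<in> {m..<?k}. f k = v}) + (if f ?k = v then 1 else 0)"
    by simp
  have "0 \<le> s ?k $ v" "0 \<le> d ?k"
    using state_cube[of ?k] flow_nonneg[of ?k] \<open>?k < K\<close> by (auto simp: mem_unit_cube_iff)
  have e: "e ?k $ v = s ?k $ v + d ?k"
    using \<open>?k < K\<close> by (simp add: flow_end_nth)
  have rise: "min (e ?k $ v) (r$v) \<le> min (s ?k $ v) (r$v) + d ?k"
    using e \<open>0 \<le> d ?k\<close> by (simp add: min_def)
  have drop: "min (s (Suc ?k) $ v) (r$v) + (if f ?k = v then r$v else 0) \<le> min (e ?k $ v) (r$v)"
    using fire_jump_potential[OF jump[OF \<open>?k < K\<close>], of v] e \<open>0 \<le> s ?k $ v\<close> \<open>0 \<le> d ?k\<close>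
      r_pos \<open>r$v \<le> 1\<close> by simp
  have sum_Suc: "(\<Sum>k = m..<m + Suc n. d k) = (\<Sum>k = m..<?k. d k) + d ?k"
    by simp
  have IH: "real (card {k \<in> {m..<?k}. f k = v}) * r$v + min (s ?k $ v) (r$v) - r$v
      \<le> (\<Sum>k = m..<?k. d k)"
    using Suc by simp
  show ?case
  proof (cases "f ?k = v")
    case True
    then show ?thesis
      using IH rise drop[unfolded if_P[OF True]] card_Suc[unfolded if_P[OF True]] sum_Suc
      by (simp only: add_Suc_right distrib_right mult_1)
  next
    case False
    then show ?thesis
      using IH rise drop[unfolded if_not_P[OF False]] card_Suc[unfolded if_not_P[OF False]] sum_Suc
      by (simp only: add_Suc_right add_0_right)
  qed
qed simp

lemma firing_count_le:
  assumes "m + n \<le> K" "(\<Sum>k = m..<m + n. d k) \<le> 1" and r: "\<forall>i. 0 < r$i \<and> r$i < 1"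
  shows "card {k \<in> {m..<m + n}. f k = v} \<le> nat \<lfloor>1 / r_min r\<rfloor> + 1"
proof (rule count_le_floor_inverse)
  have "0 \<le> min (s (m + n) $ v) (r$v)"
    using state_cube[OF assms(1)] r by (simp add: mem_unit_cube_iff less_imp_le)
  moreover have "real (card {k \<in> {m..<m + n}. f k = v}) * r$v + min (s (m + n) $ v) (r$v) - r$v
      \<le> (\<Sum>k = m..<m + n. d k)"
    using firing_potential_le[OF assms(1), of v] r by (simp add: less_imp_le)
  ultimately show "real (card {k \<in> {m..<m + n}. f k = v}) * r$v - r$v \<le> 1"
    using assms(2) by linarith
  show "0 < r_min r" "r_min r \<le> r$v"
    using r by (auto intro: r_min_pos r_min_le)
qed

lemma synced_on_flow_end_add:
  assumes "m + n \<le> K" "synced_on X 0 (s m)" "\<And>k. m \<le> k \<Longrightarrow> k < m + n \<Longrightarrow> Domain (Gs k) \<subseteq> X"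
  shows "synced_on X 0 (e (m + n))"
  using assms by (intro synced_on_flow_end synced_on_add) auto

lemma fires_in_block:
  assumes r: "\<forall>i. 0 < r$i \<and> r$i < 1" and block: "m + ell_star r \<le> K"
    and dom: "\<And>k. m \<le> k \<Longrightarrow> k < m + ell_star r \<Longrightarrow> Domain (Gs k) \<subseteq> X"
    and synced: "synced_on X 0 (s m)" and "u \<in> X"
  shows "\<exists>k \<in> {m..<m + ell_star r}. f k = u"
proof (rule ccontr)
  assume silent: "\<not> ?thesis"
  define L where "L = ell_star r"
  define B where "B = nat \<lfloor>1 / r_min r\<rfloor> + 1"
  have "s (Suc k) $ u = e k $ u" if "m \<le> k" "k < m + L" for k
  proof -
    have "k < K"
      using that block by (simp add: L_def)
    have "synced_on X 0 (e k)"
      using synced_on_flow_end_add[of m "k - m" X] that block dom synced by (simp add: L_def)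
    moreover have "Domain (Gs k) \<subseteq> X" "f k \<noteq> u"
      using that dom silent by (auto simp: L_def)
    ultimately show ?thesis
      using fire_jump_keeps_in_phase[OF jump[OF \<open>k < K\<close>] end_cube] \<open>k < K\<close> \<open>u \<in> X\<close> r by simp
  qed
  then have "s (m + L) $ u = s m $ u + (\<Sum>k = m..<m + L. d k)"
    using block by (intro phase_without_reset) (auto simp: L_def)
  moreover have "0 \<le> s m $ u" "s (m + L) $ u \<le> 1"
    using state_cube[of m] state_cube[of "m + L"] block by (auto simp: L_def mem_unit_cube_iff)
  ultimately have "(\<Sum>k = m..<m + L. d k) \<le> 1"
    by simp
  then have count: "card {k \<in> {m..<m + L}. f k = v} \<le> B" for v
    using firing_count_le block r by (simp add: L_def B_def)
  have "L = (\<Sum>v\<in>UNIV. card {k \<in> {m..<m + L}. f k = v})"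
    using sum.group[of "{m..<m + L}" UNIV f "\<lambda>_. 1 :: nat"] by simp
  also have "\<dots> = (\<Sum>v\<in>UNIV - {u}. card {k \<in> {m..<m + L}. f k = v})"
  proof -
    have "{k \<in> {m..<m + L}. f k = u} = {}"
      using silent by (auto simp: L_def)
    then show ?thesis
      using sum.remove[of UNIV u "\<lambda>v. card {k \<in> {m..<m + L}. f k = v}"] by simp
  qed
  also have "\<dots> \<le> (CARD('n) - 1) * B"
    using sum_bounded_above[of "UNIV - {u}" _ B, OF count] by (simp add: card_Diff_singleton)
  also have "\<dots> < CARD('n) * B"
    using B_def by (simp add: diff_mult_distrib)
  finally show False
    by (simp add: L_def B_def ell_star_def)
qed

lemma synced_after_block:
  assumes r: "\<forall>i. 0 < r$i \<and> r$i < 1" and block: "m + ell_star r \<le> K"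
    and graph: "\<And>k. m \<le> k \<Longrightarrow> k < m + ell_star r \<Longrightarrow> Gs k = G" and "Domain G \<subseteq> X"
    and synced: "synced_on X 0 (s m)"
  shows "synced_on (X \<union> Range G) 0 (s (m + ell_star r))"
proof -
  define L where "L = ell_star r"
  have dom: "Domain (Gs k) \<subseteq> X" if "m \<le> k" "k < m + L" for k
    using graph that \<open>Domain G \<subseteq> X\<close> by (simp add: L_def)
  have after_firing: "synced_on (X \<union> G `` {u}) 0 (s (m + L))" if "u \<in> X" for u
  proof -
    obtain k where k: "m \<le> k" "k < m + L" "f k = u"
      using fires_in_block[OF r block _ synced \<open>u \<in> X\<close>] dom by (auto simp: L_def)
    have "k < K" "Gs k = G"
      using k block graph by (auto simp: L_def)
    have "synced_on X 0 (e k)"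
      using synced_on_flow_end_add[of m "k - m" X] k block dom synced by (simp add: L_def)
    then have "synced_on (X \<union> G `` {u}) 0 (s (Suc k))"
      using fire_jump_resets_in_phase[OF jump[OF \<open>k < K\<close>] end_cube] \<open>Gs k = G\<close> \<open>f k = u\<close>
        \<open>k < K\<close> \<open>u \<in> X\<close>
      by (intro synced_on_end_points) simp
    moreover have "G\<inverse> `` (X \<union> G `` {u}) \<subseteq> X \<union> G `` {u}"
      using \<open>Domain G \<subseteq> X\<close> by blast
    ultimately have "synced_on (X \<union> G `` {u}) 0 (s (Suc k + (m + L - Suc k)))"
      using k block graph by (intro synced_on_add) (auto simp: L_def)
    then show ?thesis
      using k by simp
  qed
  show ?thesis
  proof (cases "X = {}")
    case True
    then show ?thesis
      using \<open>Domain G \<subseteq> X\<close> by (simp add: synced_on_def Domain_empty_iff)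
  next
    case False
    then obtain u0 where "u0 \<in> X"
      by blast
    have "phase_dist (s (m + L) $ a) (s (m + L) $ u0) \<le> 0" if "a \<in> X \<union> Range G" for a
    proof -
      have "\<exists>u\<in>X. a \<in> X \<union> G `` {u}"
        using that \<open>u0 \<in> X\<close> \<open>Domain G \<subseteq> X\<close> by blast
      then obtain u where "u \<in> X" "a \<in> X \<union> G `` {u}"
        by blast
      then show ?thesis
        using after_firing[of u] \<open>u0 \<in> X\<close> by (simp add: synced_on_def)
    qed
    then show ?thesis
      using state_cube block by (intro synced_on_0_if_in_phase) (auto simp: L_def)
  qed
qed

end

section \<open>Shortest paths and the synchronization string\<close>

lemma is_path_take: "is_path E p \<Longrightarrow> 0 < n \<Longrightarrow> is_path E (take n p)"
  by (auto simp: is_path_def)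

lemma is_path_snoc:
  assumes "is_path E p" "w \<notin> set p" "(last p, w) \<in> E"
  shows "is_path E (p @ [w])"
  unfolding is_path_def
proof (intro conjI allI impI)
  show "p @ [w] \<noteq> []" "distinct (p @ [w])"
    using assms by (auto simp: is_path_def)
  fix k assume k: "Suc k < length (p @ [w])"
  show "((p @ [w]) ! k, (p @ [w]) ! Suc k) \<in> E"
  proof (cases "Suc k < length p")
    case True
    then show ?thesis
      using assms(1) by (simp add: is_path_def nth_append)
  next
    case False
    then have "k = length p - 1" "p \<noteq> []"
      using k assms(1) by (auto simp: is_path_def)
    then show ?thesis
      using assms(3) by (simp add: nth_append last_conv_nth)
  qed
qed

lemma shortest_path_exists:
  assumes "is_root E i"
  shows "\<exists>p. is_path E p \<and> hd p = i \<and> last p = j \<and> length p = Suc (sp_dist E i j)"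
proof -
  obtain p where p: "is_path E p" "hd p = i" "last p = j"
    using assms by (auto simp: is_root_def)
  then have "length p = Suc (length p - 1)"
    by (cases p) (auto simp: is_path_def)
  with p have "\<exists>q p. is_path E p \<and> hd p = i \<and> last p = j \<and> length p = Suc q"
    by blast
  then show ?thesis
    unfolding sp_dist_def by (rule LeastI_ex)
qed

lemma sp_dist_less_length:
  assumes "is_path E p" "hd p = i" "last p = j"
  shows "sp_dist E i j < length p"
proof -
  have "length p = Suc (length p - 1)"
    using assms by (cases p) (auto simp: is_path_def)
  then have "sp_dist E i j \<le> length p - 1"
    unfolding sp_dist_def using assms by (intro Least_le) blast
  then show ?thesis
    using \<open>length p = Suc (length p - 1)\<close> by linarith
qed

lemma sp_dist_eq_0:
  assumes "is_root E i" "sp_dist E i j = 0"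
  shows "j = i"
proof -
  obtain p where "is_path E p" "hd p = i" "last p = j" "length p = Suc 0"
    using shortest_path_exists[OF assms(1), of j] assms(2) by auto
  then show ?thesis
    by (cases p) auto
qed

lemma sp_dist_edge_le:
  assumes "is_root E i" "(u, w) \<in> E"
  shows "sp_dist E i w \<le> Suc (sp_dist E i u)"
proof -
  obtain p where p: "is_path E p" "hd p = i" "last p = u" "length p = Suc (sp_dist E i u)"
    using shortest_path_exists[OF assms(1)] by blast
  show ?thesis
  proof (cases "w \<in> set p")
    case True
    then obtain t where t: "t < length p" "p ! t = w"
      by (auto simp: in_set_conv_nth)
    have "hd (take (Suc t) p) = i"
      using p t by (cases p) auto
    moreover have "last (take (Suc t) p) = w"
      using t by (subst last_conv_nth) auto
    ultimately have "sp_dist E i w < length (take (Suc t) p)"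
      using is_path_take[OF p(1)] by (intro sp_dist_less_length) simp_all
    then show ?thesis
      using p t by simp
  next
    case False
    have "p \<noteq> []"
      using p by (simp add: is_path_def)
    then have "sp_dist E i w < length (p @ [w])"
      using p False assms(2) is_path_snoc[OF p(1) False] by (intro sp_dist_less_length) simp_all
    then show ?thesis
      using p by simp
  qed
qed

lemma sp_dist_Suc_predecessor:
  assumes root: "is_root E i" and w: "sp_dist E i w = Suc q"
  shows "\<exists>u. sp_dist E i u = q \<and> (u, w) \<in> E"
proof -
  obtain p where p: "is_path E p" "hd p = i" "last p = w" "length p = Suc (Suc q)"
    using shortest_path_exists[OF root, of w] w by auto
  have "p \<noteq> []"
    using p by (simp add: is_path_def)
  have "(p ! q, p ! Suc q) \<in> E"
    using p by (simp add: is_path_def)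
  moreover have "p ! Suc q = w"
    using p \<open>p \<noteq> []\<close> by (simp add: last_conv_nth)
  ultimately have edge: "(p ! q, w) \<in> E"
    by simp
  have "hd (take (Suc q) p) = i"
    using p by (cases p) auto
  moreover have "last (take (Suc q) p) = p ! q"
    using p by (subst last_conv_nth) auto
  ultimately have "sp_dist E i (p ! q) < length (take (Suc q) p)"
    using is_path_take[OF p(1)] by (intro sp_dist_less_length) simp_all
  moreover have "Suc q \<le> Suc (sp_dist E i (p ! q))"
    using sp_dist_edge_le[OF root \<open>(p ! q, w) \<in> E\<close>] w by simp
  ultimately show ?thesis
    using p edge by (intro exI[of _ "p ! q"]) simp
qed

lemma sp_dist_le_max_dist: "sp_dist E i j \<le> max_dist E (i::'n::finite)"
  unfolding max_dist_def by (rule Max_ge) auto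

lemma mem_level_graph_iff: "(a, b) \<in> level_graph E i q \<longleftrightarrow> sp_dist E i a = q \<and> (a, b) \<in> E"
  by (auto simp: level_graph_def level_set_def out_edges_def)

lemma sp_dist_le_Suc_subset:
  assumes "is_root E i"
  shows "{j. sp_dist E i j \<le> Suc q} \<subseteq> {j. sp_dist E i j \<le> q} \<union> Range (level_graph E i q)"
  using sp_dist_Suc_predecessor[OF assms] by (fastforce simp: le_Suc_eq mem_level_graph_iff)

lemma length_concat_replicate: "length (concat (map (\<lambda>q. replicate L (g q)) [0..<Q])) = Q * L"
  by (induction Q) auto

lemma nth_concat_replicate:
  "q < Q \<Longrightarrow> t < L \<Longrightarrow> concat (map (\<lambda>q. replicate L (g q)) [0..<Q]) ! (q * L + t) = g q"
proof (induction Q)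
  case (Suc Q)
  show ?case
  proof (cases "q < Q")
    case True
    have "Suc q * L \<le> Q * L"
      using True by (intro mult_le_mono1) simp
    then have "q * L + t < Q * L"
      using Suc.prems by simp
    then show ?thesis
      using Suc True by (simp add: nth_append length_concat_replicate)
  next
    case False
    then have "q = Q"
      using Suc.prems by simp
    then show ?thesis
      using Suc.prems by (simp add: nth_append length_concat_replicate)
  qed
qed simp

lemma length_sync_string: "length (sync_string E r i) = max_dist E i * ell_star r"
  by (simp add: sync_string_def length_concat_replicate)

lemma nth_sync_string:
  "q < max_dist E i \<Longrightarrow> t < ell_star r \<Longrightarrow> sync_string E r i ! (q * ell_star r + t) = level_graph E i q"
  unfolding sync_string_def by (rule nth_concat_replicate)

context jump_chain
begin

lemma synced_after_sync_string:
  assumes r: "\<forall>i. 0 < r$i \<and> r$i < 1" and root: "is_root E i"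
    and occurs: "\<And>k. k < length (sync_string E r i) \<Longrightarrow> Gs (m + k) = sync_string E r i ! k"
    and fits: "m + length (sync_string E r i) \<le> K"
  shows "synced_on UNIV 0 (s (m + length (sync_string E r i)))"
proof -
  define L where "L = ell_star r"
  define Q where "Q = max_dist E i"
  have len: "length (sync_string E r i) = Q * L"
    by (simp add: length_sync_string Q_def L_def)
  have "synced_on {j. sp_dist E i j \<le> q} 0 (s (m + q * L))" if "q \<le> Q" for q
    using that
  proof (induction q)
    case 0
    have "{j. sp_dist E i j \<le> 0} \<subseteq> {i}"
      using sp_dist_eq_0[OF root] by auto
    then show ?case
      by (rule synced_on_subset) (simp add: synced_on_def)
  next
    case (Suc q)
    let ?X = "{j. sp_dist E i j \<le> q}" and ?G = "level_graph E i q"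
    have "Suc q * L \<le> Q * L"
      using Suc.prems by (intro mult_le_mono1) simp
    then have block: "m + q * L + L \<le> K"
      using fits len by simp
    have "Gs k = ?G" if "m + q * L \<le> k" "k < m + q * L + L" for k
    proof -
      define t where "t = k - (m + q * L)"
      have k: "k = m + (q * L + t)" "t < L"
        using that by (auto simp: t_def)
      then have "Gs k = sync_string E r i ! (q * L + t)"
        using occurs len \<open>Suc q * L \<le> Q * L\<close> by simp
      also have "\<dots> = ?G"
        using Suc.prems k by (simp add: nth_sync_string Suc_le_eq Q_def L_def)
      finally show ?thesis .
    qed
    moreover have "Domain ?G \<subseteq> ?X"
      by (auto simp: mem_level_graph_iff)
    ultimately have "synced_on (?X \<union> Range ?G) 0 (s (m + q * L + ell_star r))"
      using Suc r block by (intro synced_after_block) (auto simp: L_def)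
    then show ?case
      using synced_on_subset[OF sp_dist_le_Suc_subset[OF root]]
      by (simp add: L_def add.commute add.left_commute)
  qed
  moreover have "{j. sp_dist E i j \<le> Q} = UNIV"
    using sp_dist_le_max_dist by (auto simp: Q_def)
  ultimately show ?thesis
    using len by (metis order_refl)
qed

end

section \<open>Solutions of the hybrid system\<close>

text \<open>The j-th jump happens at time tt (Suc j), at the end of the j-th flow interval.\<close>
definition jump_times :: "(real \<times> nat) set \<Rightarrow> nat \<Rightarrow> (nat \<Rightarrow> real) \<Rightarrow> bool" where
  "jump_times hdom K tt \<longleftrightarrow> tt 0 = 0 \<and>
     (\<forall>j\<le>K. tt j \<le> tt (Suc j) \<and> (\<forall>t\<in>{tt j..tt (Suc j)}. (t, j) \<in> hdom))"

lemma jump_timesD: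
  assumes "jump_times hdom K tt" "j \<le> K"
  shows "tt j \<le> tt (Suc j)" and "\<And>t. t \<in> {tt j..tt (Suc j)} \<Longrightarrow> (t, j) \<in> hdom"
  using assms by (auto simp: jump_times_def)

lemma jump_times_jump:
  assumes "jump_times hdom K tt" "j < K"
  shows "(tt (Suc j), j) \<in> hdom" "(tt (Suc j), Suc j) \<in> hdom"
  using jump_timesD[OF assms(1), of j] jump_timesD[OF assms(1), of "Suc j"] assms(2) by simp_all

lemma hybrid_time_domain_jump_times:
  assumes "hybrid_time_domain hdom" "(T, K) \<in> hdom"
  obtains tt where "jump_times hdom K tt" "tt (Suc K) = T"
proof -
  have "compact_htd (hdom \<inter> ({0..T} \<times> {0..K}))"
    using assms by (auto simp: hybrid_time_domain_def)
  then obtain J tt where tt0: "tt 0 = 0" and mono: "\<forall>j\<le>J. tt j \<le> tt (Suc j)"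
    and prefix: "hdom \<inter> ({0..T} \<times> {0..K}) = (\<Union>j\<in>{0..J}. {tt j..tt (Suc j)} \<times> {j})"
    unfolding compact_htd_def by blast
  have "0 \<le> T"
    using assms by (auto simp: hybrid_time_domain_def)
  then have "(T, K) \<in> hdom \<inter> ({0..T} \<times> {0..K})"
    using assms(2) by simp
  then have TK: "(T, K) \<in> (\<Union>j\<in>{0..J}. {tt j..tt (Suc j)} \<times> {j})"
    unfolding prefix .
  have "(tt J, J) \<in> (\<Union>j\<in>{0..J}. {tt j..tt (Suc j)} \<times> {j})"
    using mono by auto
  then have "J \<le> K"
    unfolding prefix[symmetric] by simp
  with TK have "J = K"
    by auto
  have "(tt (Suc K), K) \<in> (\<Union>j\<in>{0..J}. {tt j..tt (Suc j)} \<times> {j})"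
    using mono \<open>J = K\<close> by auto
  then have "tt (Suc K) \<le> T"
    unfolding prefix[symmetric] by simp
  with TK have "tt (Suc K) = T"
    by auto
  have "(t, j) \<in> hdom" if "j \<le> K" "t \<in> {tt j..tt (Suc j)}" for j t
  proof -
    have "(t, j) \<in> (\<Union>j\<in>{0..J}. {tt j..tt (Suc j)} \<times> {j})"
      using that \<open>J = K\<close> by auto
    then show ?thesis
      unfolding prefix[symmetric] by simp
  qed
  then have "jump_times hdom K tt"
    using tt0 mono \<open>J = K\<close> by (simp add: jump_times_def)
  then show thesis
    using that \<open>tt (Suc K) = T\<close> by blast
qed

lemma constant_derivative_affine:
  fixes y :: "real \<Rightarrow> 'a::banach"
  assumes "a \<le> b" and cont: "continuous_on {a..b} y"
    and deriv: "\<And>t. a < t \<Longrightarrow> t < b \<Longrightarrow> (y has_vector_derivative c) (at t)"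
    and "t \<in> {a..b}"
  shows "y t = y a + (t - a) *\<^sub>R c"
proof -
  define z where "z t = y t - (t - a) *\<^sub>R c" for t
  have "z t = z a"
  proof (rule has_derivative_zero_unique_strong_interval[of "{a, b}"])
    show "continuous_on {a..b} z"
      unfolding z_def by (intro continuous_intros cont)
    fix u assume "u \<in> {a..b} - {a, b}"
    then have "a < u" "u < b"
      by auto
    have "((\<lambda>t. (t - a) *\<^sub>R c) has_vector_derivative ((u - a) *\<^sub>R 0 + 1 *\<^sub>R c)) (at u)"
      by (intro has_vector_derivative_scaleR derivative_eq_intros) auto
    then have "((\<lambda>t. (t - a) *\<^sub>R c) has_vector_derivative c) (at u)"
      by simp
    then have "(z has_vector_derivative (c - c)) (at u)"
      unfolding z_def by (rule has_vector_derivative_diff[OF deriv[OF \<open>a < u\<close> \<open>u < b\<close>]])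
    then have "(z has_derivative (\<lambda>h. 0)) (at u)"
      by (simp add: has_vector_derivative_def)
    then show "(z has_derivative (\<lambda>h. 0)) (at u within {a..b})"
      by (rule has_derivative_at_withinI)
  qed (use assms(1,4) in simp_all)
  then show ?thesis
    by (simp add: z_def algebra_simps)
qed

lemma solution_flow:
  fixes x :: "real \<times> nat \<Rightarrow> (real^'n::finite) \<times> nat"
  assumes sol: "is_solution Tp \<xi> r hdom x" and "0 < Tp" "a \<le> b"
    and sub: "\<And>t. t \<in> {a..b} \<Longrightarrow> (t, j) \<in> hdom"
  shows solution_flow_state: "fst (x (b, j)) = fst (x (a, j)) + (\<chi> _. (b - a) / Tp)"
    and solution_flow_counter: "snd (x (b, j)) = snd (x (a, j))"
    and solution_flow_cube: "fst (x (a, j)) \<in> cbox 0 1 \<Longrightarrow> fst (x (b, j)) \<in> cbox 0 1"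
proof -
  let ?I = "{t. (t, j) \<in> hdom}"
  have flow: "continuous_on ?I (\<lambda>t. fst (x (t, j)))"
      "\<forall>t\<in>?I. \<forall>t'\<in>?I. snd (x (t, j)) = snd (x (t', j))"
      "\<forall>t\<in>interior ?I. x (t, j) \<in> C_set \<and>
         ((\<lambda>s. fst (x (s, j))) has_vector_derivative ((\<chi> _. 1 / Tp) :: real^'n)) (at t)"
    using sol unfolding is_solution_def Let_def by blast+
  have "{a..b} \<subseteq> ?I"
    using sub by blast
  have "t \<in> interior ?I" if "a < t" "t < b" for t
    using that interior_mono[OF \<open>{a..b} \<subseteq> ?I\<close>] by (simp add: subset_iff)
  then have in_C: "x (t, j) \<in> C_set"
    and deriv: "((\<lambda>s. fst (x (s, j))) has_vector_derivative ((\<chi> _. 1 / Tp) :: real^'n)) (at t)"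
    if "a < t" "t < b" for t
    using flow(3) that by blast+
  have state: "fst (x (t, j)) = fst (x (a, j)) + (\<chi> _. (t - a) / Tp)" if "t \<in> {a..b}" for t
  proof -
    have "fst (x (t, j)) = fst (x (a, j)) + (t - a) *\<^sub>R ((\<chi> _. 1 / Tp) :: real^'n)"
      using constant_derivative_affine[OF \<open>a \<le> b\<close> continuous_on_subset[OF flow(1) \<open>{a..b} \<subseteq> ?I\<close>]
          deriv that] .
    then show ?thesis
      by (simp add: vec_eq_iff)
  qed
  show "fst (x (b, j)) = fst (x (a, j)) + (\<chi> _. (b - a) / Tp)"
    using state[of b] \<open>a \<le> b\<close> by simp
  have "a \<in> ?I" "b \<in> ?I"
    using sub \<open>a \<le> b\<close> by simp_all
  then show "snd (x (b, j)) = snd (x (a, j))"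
    using flow(2) by blast
  assume start: "fst (x (a, j)) \<in> cbox 0 1"
  \<comment> \<open>Every phase stays at most 1 in the open interval, where the arc is in C; hence also at b.\<close>
  have "fst (x (b, j)) $ i \<le> 1" for i
  proof (cases "a < b")
    case True
    show ?thesis
    proof (rule dense_le_bounded)
      show "fst (x (a, j)) $ i < fst (x (b, j)) $ i"
        using state[of b] True \<open>0 < Tp\<close> by simp
      fix w assume w: "fst (x (a, j)) $ i < w" "w < fst (x (b, j)) $ i"
      define t where "t = a + (w - fst (x (a, j)) $ i) * Tp"
      have "a < t" "t < b"
        using w state[of b] \<open>a \<le> b\<close> \<open>0 < Tp\<close> by (auto simp: t_def field_simps)
      then have "fst (x (t, j)) $ i \<le> 1"
        using in_C[OF \<open>a < t\<close> \<open>t < b\<close>] by (cases "x (t, j)") (simp add: C_set_def)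
      then show "w \<le> 1"
        using state[of t] \<open>a < t\<close> \<open>t < b\<close> \<open>0 < Tp\<close> by (simp add: t_def)
    qed
  qed (use start \<open>a \<le> b\<close> in \<open>simp add: mem_unit_cube_iff\<close>)
  moreover have "0 \<le> fst (x (b, j)) $ i" for i
    using state[of b] start \<open>a \<le> b\<close> \<open>0 < Tp\<close> by (simp add: mem_unit_cube_iff add_nonneg_nonneg)
  ultimately show "fst (x (b, j)) \<in> cbox 0 1"
    by (simp add: mem_unit_cube_iff)
qed

lemma closed_C_set: "closed (C_set :: ((real^'n::finite) \<times> nat) set)"
  unfolding C_set_def case_prod_unfold
  by (intro closed_Collect_all closed_Collect_conj closed_Collect_le continuous_intros)

lemma solution_initial_cube:
  fixes x :: "real \<times> nat \<Rightarrow> (real^'n::finite) \<times> nat"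
  assumes "is_solution Tp \<xi> r hdom x"
  shows "fst (x (0, 0)) \<in> cbox 0 1"
proof -
  have "x (0, 0) \<in> closure C_set \<union> D_set"
    using assms unfolding is_solution_def by (elim conjE)
  then have "x (0, 0) \<in> C_set \<union> D_set"
    using closure_closed[OF closed_C_set[where 'n = 'n]] by simp
  then show ?thesis
    by (cases "x (0, 0)") (auto simp: C_set_def D_set_def mem_D_tau_iff mem_unit_cube_iff)
qed

lemma solution_jump:
  fixes x :: "real \<times> nat \<Rightarrow> (real^'n::finite) \<times> nat"
  assumes "is_solution Tp \<xi> r hdom x" "(t, j) \<in> hdom" "(t, Suc j) \<in> hdom"
  shows "\<exists>i. fire_jump (\<xi> (Suc (snd (x (t, j))))) r i (fst (x (t, j))) (fst (x (t, Suc j)))"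
    and "snd (x (t, Suc j)) = Suc (snd (x (t, j)))"
proof -
  have "fst (x (t, Suc j)) \<in> G_hull (\<xi> (Suc (snd (x (t, j))))) r (fst (x (t, j)))"
    using assms unfolding is_solution_def by blast
  then show "\<exists>i. fire_jump (\<xi> (Suc (snd (x (t, j))))) r i (fst (x (t, j))) (fst (x (t, Suc j)))"
    by (simp add: G_hull_eq mem_G0_iff)
  show "snd (x (t, Suc j)) = Suc (snd (x (t, j)))"
    using assms unfolding is_solution_def by blast
qed

lemma solution_counter:
  fixes x :: "real \<times> nat \<Rightarrow> (real^'n::finite) \<times> nat"
  assumes sol: "is_solution Tp \<xi> r hdom x" and "0 < Tp" and times: "jump_times hdom K tt"
    and "j \<le> K"
  shows "snd (x (tt (Suc j), j)) = snd (x (0, 0)) + j"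
  using \<open>j \<le> K\<close>
proof (induction j)
  case 0
  then show ?case
    using solution_flow_counter[OF sol \<open>0 < Tp\<close> jump_timesD[OF times 0]] times
    by (simp add: jump_times_def)
next
  case (Suc j)
  then show ?case
    using solution_jump(2)[OF sol jump_times_jump[OF times]]
      solution_flow_counter[OF sol \<open>0 < Tp\<close> jump_timesD[OF times Suc.prems]]
    by simp
qed

lemma solution_jump_chain_at_jump_times:
  fixes x :: "real \<times> nat \<Rightarrow> (real^'n::finite) \<times> nat"
  assumes sol: "is_solution Tp \<xi> r hdom x" and "0 < Tp" and times: "jump_times hdom K tt"
  defines "s \<equiv> \<lambda>j. fst (x (tt j, j))" and "e \<equiv> \<lambda>j. fst (x (tt (Suc j), j))"
    and "d \<equiv> \<lambda>j. (tt (Suc j) - tt j) / Tp"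
  obtains f where "jump_chain (\<lambda>j. \<xi> (snd (x (0, 0)) + Suc j)) r K f s e d"
proof -
  have flow: "e j = s j + (\<chi> _. d j)" "s j \<in> cbox 0 1 \<Longrightarrow> e j \<in> cbox 0 1" if "j \<le> K" for j
    using solution_flow[OF sol \<open>0 < Tp\<close> jump_timesD[OF times that]]
    by (simp_all add: s_def e_def d_def)
  have "\<exists>i. fire_jump (\<xi> (snd (x (0, 0)) + Suc j)) r i (e j) (s (Suc j))" if "j < K" for j
    using solution_jump(1)[OF sol jump_times_jump[OF times that]]
      solution_counter[OF sol \<open>0 < Tp\<close> times, of j] that
    by (simp add: s_def e_def)
  then obtain f
    where jump: "\<And>j. j < K \<Longrightarrow> fire_jump (\<xi> (snd (x (0, 0)) + Suc j)) r (f j) (e j) (s (Suc j))"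
    by metis
  have cube: "s j \<in> cbox 0 1 \<and> e j \<in> cbox 0 1" if "j \<le> K" for j
    using that
  proof (induction j)
    case 0
    then show ?case
      using flow(2)[of 0] solution_initial_cube[OF sol] times by (simp add: s_def jump_times_def)
  next
    case (Suc j)
    then have "s (Suc j) \<in> cbox 0 1"
      using fire_jump_unit_cube[OF _ jump[of j]] by simp
    then show ?case
      using flow(2)[OF Suc.prems] by simp
  qed
  have "jump_chain (\<lambda>j. \<xi> (snd (x (0, 0)) + Suc j)) r K f s e d"
    using cube flow(1) jump jump_timesD(1)[OF times] \<open>0 < Tp\<close>
    by unfold_locales (simp_all add: d_def)
  then show thesis
    by (rule that)
qed

lemma solution_jump_chain:
  fixes x :: "real \<times> nat \<Rightarrow> (real^'n::finite) \<times> nat"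
  assumes sol: "is_solution Tp \<xi> r hdom x" and "0 < Tp" and "(T, K) \<in> hdom"
  obtains f s e d where "jump_chain (\<lambda>j. \<xi> (snd (x (0, 0)) + Suc j)) r K f s e d"
    and "s 0 = fst (x (0, 0))" and "e K = fst (x (T, K))" and "T \<le> real (Suc K) * Tp"
proof -
  have "hybrid_time_domain hdom"
    using sol unfolding is_solution_def by (elim conjE)
  then obtain tt where times: "jump_times hdom K tt" and "tt (Suc K) = T"
    using hybrid_time_domain_jump_times \<open>(T, K) \<in> hdom\<close> by blast
  define d where "d j = (tt (Suc j) - tt j) / Tp" for j
  obtain f where chain: "jump_chain (\<lambda>j. \<xi> (snd (x (0, 0)) + Suc j)) r K f
      (\<lambda>j. fst (x (tt j, j))) (\<lambda>j. fst (x (tt (Suc j), j))) d"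
    unfolding d_def by (rule solution_jump_chain_at_jump_times[OF sol \<open>0 < Tp\<close> times])
  have "T = (\<Sum>j<Suc K. Tp * d j)"
    using sum_lessThan_telescope[of tt "Suc K"] times \<open>tt (Suc K) = T\<close> \<open>0 < Tp\<close>
    by (simp add: d_def jump_times_def)
  also have "\<dots> \<le> (\<Sum>j<Suc K. Tp)"
    using jump_chain.flow_le_one[OF chain] \<open>0 < Tp\<close> by (intro sum_mono) simp
  finally show thesis
    using that[OF chain] times \<open>tt (Suc K) = T\<close> by (simp add: jump_times_def)
qed

lemma solution_jump_count_ge:
  fixes x :: "real \<times> nat \<Rightarrow> (real^'n::finite) \<times> nat"
  assumes "is_solution Tp \<xi> r hdom x" "0 < Tp" "(t, k) \<in> hdom"
    and "(real n + 1) * (Tp + 1) \<le> t + real k"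
  shows "n \<le> k"
proof (rule ccontr)
  assume "\<not> n \<le> k"
  then have "real k + 1 \<le> real n"
    by simp
  obtain f s e d where "jump_chain (\<lambda>j. \<xi> (snd (x (0, 0)) + Suc j)) r k f s e d"
    and "s 0 = fst (x (0, 0))" and "e k = fst (x (t, k))" and "t \<le> real (Suc k) * Tp"
    by (rule solution_jump_chain[OF assms(1-3)])
  then have "t + real k \<le> (real k + 1) * Tp + real k"
    by (simp add: algebra_simps)
  also have "\<dots> < (real k + 1) * (Tp + 1)"
    by (simp add: algebra_simps)
  also have "\<dots> \<le> real n * (Tp + 1)"
    using \<open>real k + 1 \<le> real n\<close> \<open>0 < Tp\<close> by (intro mult_right_mono) simp_all
  also have "\<dots> < (real n + 1) * (Tp + 1)"
    using \<open>0 < Tp\<close> by (simp add: algebra_simps)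
  finally show False
    using assms(4) by simp
qed

section \<open>Stability and attractivity\<close>

lemma class_K_inf_linear: "0 < c \<Longrightarrow> class_K_inf (\<lambda>s. c * s)"
  unfolding class_K_inf_def
  by (auto intro!: continuous_intros strict_mono_onI
      filterlim_tendsto_pos_mult_at_top[OF tendsto_const _ filterlim_ident])

lemma UGS_if_Tp_pos:
  fixes r :: "real^'n::finite"
  assumes "0 < Tp"
  shows "UGS Tp \<xi> r"
  unfolding UGS_def
proof (intro exI conjI allI impI ballI)
  define c where "c = 4 * real CARD('n)"
  show "class_K_inf (\<lambda>s. c * s)"
    by (rule class_K_inf_linear) (simp add: c_def)
  fix hdom and x :: "real \<times> nat \<Rightarrow> (real^'n) \<times> nat" and tk
  assume sol: "is_solution Tp \<xi> r hdom x" and "tk \<in> hdom"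
  obtain t k where tk: "tk = (t, k)"
    by (cases tk)
  have "(t, k) \<in> hdom"
    using \<open>tk \<in> hdom\<close> tk by simp
  obtain f s e d where chain: "jump_chain (\<lambda>j. \<xi> (snd (x (0, 0)) + Suc j)) r k f s e d"
    and "s 0 = fst (x (0, 0))" and "e k = fst (x (t, k))" and "t \<le> real (Suc k) * Tp"
    by (rule solution_jump_chain[OF sol \<open>0 < Tp\<close> \<open>(t, k) \<in> hdom\<close>])
  have "synced_on UNIV (2 * dist_A (x (0, 0))) (s 0)"
    using synced_on_dist_A[of "fst (x (0, 0))" "snd (x (0, 0))"] \<open>s 0 = fst (x (0, 0))\<close> by simp
  then have synced: "synced_on UNIV (2 * dist_A (x (0, 0))) (fst (x (t, k)))"
    using jump_chain.synced_on_UNIV_flow_end[OF chain, of 0 k] \<open>e k = fst (x (t, k))\<close> by simp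
  have "fst (x (t, k)) \<in> cbox 0 1"
    using jump_chain.end_cube[OF chain, of k] \<open>e k = fst (x (t, k))\<close> by simp
  from dist_A_le_synced_on[OF this synced, of "snd (x (t, k))"]
  have "dist_A (fst (x (t, k)), snd (x (t, k))) \<le> c * dist_A (x (0, 0))"
    by (simp add: c_def)
  then show "case tk of (t, k) \<Rightarrow> dist_A (x (t, k)) \<le> c * dist_A (x (0, 0))"
    by (simp add: tk)
qed

lemma dist_A_eq_0_after_occurrence:
  fixes x :: "real \<times> nat \<Rightarrow> (real^'n::finite) \<times> nat"
  assumes sol: "is_solution Tp \<xi> r hdom x" and "0 < Tp" and r: "\<forall>i. 0 < r$i \<and> r$i < 1"
    and root: "is_root E i" and occurs: "occurs_at \<xi> (sync_string E r i) s'"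
    and after: "snd (x (0, 0)) < s'" and "(t, k) \<in> hdom"
    and enough: "s' - snd (x (0, 0)) - 1 + length (sync_string E r i) \<le> k"
  shows "dist_A (x (t, k)) = 0"
proof -
  define l0 where "l0 = snd (x (0, 0))"
  define m where "m = s' - l0 - 1"
  obtain f s e d where chain: "jump_chain (\<lambda>j. \<xi> (l0 + Suc j)) r k f s e d"
    and "s 0 = fst (x (0, 0))" and "e k = fst (x (t, k))" and "t \<le> real (Suc k) * Tp"
    unfolding l0_def by (rule solution_jump_chain[OF sol \<open>0 < Tp\<close> \<open>(t, k) \<in> hdom\<close>])
  interpret jump_chain "\<lambda>j. \<xi> (l0 + Suc j)" r k f s e d
    by (rule chain)
  have "\<xi> (l0 + Suc (m + j)) = sync_string E r i ! j" if "j < length (sync_string E r i)" for j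
    using occurs that after by (simp add: occurs_at_def m_def l0_def)
  then have "synced_on UNIV 0 (s (m + length (sync_string E r i)))"
    using enough by (intro synced_after_sync_string[OF r root]) (simp_all add: m_def l0_def)
  moreover have "m + length (sync_string E r i) \<le> k"
    using enough by (simp add: m_def l0_def)
  ultimately have "synced_on UNIV 0 (fst (x (t, k)))"
    using synced_on_UNIV_flow_end[OF _ order_refl] \<open>e k = fst (x (t, k))\<close> by metis
  then have "dist_A (x (t, k)) \<le> 0"
    using dist_A_le_synced_on[of "fst (x (t, k))" 0 "snd (x (t, k))"] end_cube[of k]
      \<open>e k = fst (x (t, k))\<close> by simp
  then show ?thesis
    by (simp add: dist_A_def infdist_nonneg antisym)
qed

lemma GFTA_if_contains_inf_often:
  fixes r :: "real^'n::finite"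
  assumes "0 < Tp" and r: "\<forall>i. 0 < r$i \<and> r$i < 1" and root: "is_root E i"
    and "contains_inf_often \<xi> (sync_string E r i)"
  shows "GFTA Tp \<xi> r"
proof -
  obtain S where "infinite S" and occurs: "\<And>s'. s' \<in> S \<Longrightarrow> occurs_at \<xi> (sync_string E r i) s'"
    using assms(4) unfolding contains_inf_often_def by blast
  define next_occ where "next_occ l = (LEAST s'. s' \<in> S \<and> l < s')" for l :: nat
  have next_occ: "next_occ l \<in> S \<and> l < next_occ l" for l
  proof -
    have "\<exists>s'. s' \<in> S \<and> l < s'"
      using \<open>infinite S\<close> unfolding infinite_nat_iff_unbounded by blast
    then show ?thesis
      unfolding next_occ_def by (rule LeastI_ex)
  qed
  define Tbar where "Tbar z =
      (real (next_occ (snd z) - snd z - 1 + length (sync_string E r i)) + 1) * (Tp + 1)"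
    for z :: "(real^'n) \<times> nat"
  show ?thesis
    unfolding GFTA_def
  proof (intro exI[of _ Tbar] allI impI conjI ballI)
    fix hdom and x :: "real \<times> nat \<Rightarrow> (real^'n) \<times> nat" and tk
    assume sol: "is_solution Tp \<xi> r hdom x"
    show "0 < Tbar (x (0, 0))"
      using \<open>0 < Tp\<close> by (simp add: Tbar_def add_pos_pos)
    assume "tk \<in> hdom"
    obtain t k where tk: "tk = (t, k)"
      by (cases tk)
    have "dist_A (x (t, k)) = 0" if "Tbar (x (0, 0)) \<le> t + real k"
      using that next_occ[of "snd (x (0, 0))"] occurs \<open>tk \<in> hdom\<close> tk
        solution_jump_count_ge[OF sol \<open>0 < Tp\<close>, of t k]
      by (intro dist_A_eq_0_after_occurrence[OF sol \<open>0 < Tp\<close> r root]) (auto simp: Tbar_def)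
    then show "case tk of (t, k) \<Rightarrow> Tbar (x (0, 0)) \<le> t + real k \<longrightarrow> dist_A (x (t, k)) = 0"
      by (simp add: tk)
  qed
qed

lemma GFxTA_if_contains_unif_inf_often:
  fixes r :: "real^'n::finite"
  assumes "0 < Tp" and r: "\<forall>i. 0 < r$i \<and> r$i < 1" and root: "is_root E i"
    and "contains_unif_inf_often \<xi> (sync_string E r i)"
  shows "GFxTA Tp \<xi> r"
proof -
  obtain n where window: "\<And>l. 1 \<le> l \<Longrightarrow>
      \<exists>s'. l \<le> s' \<and> s' + length (sync_string E r i) \<le> l + n \<and> occurs_at \<xi> (sync_string E r i) s'"
    using assms(4) unfolding contains_unif_inf_often_def by blast
  show ?thesis
    unfolding GFxTA_def
  proof (intro exI[of _ "(real n + 1) * (Tp + 1)"] allI impI conjI ballI)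
    show "0 < (real n + 1) * (Tp + 1)"
      using \<open>0 < Tp\<close> by (simp add: add_pos_pos)
    fix hdom and x :: "real \<times> nat \<Rightarrow> (real^'n) \<times> nat" and tk
    assume sol: "is_solution Tp \<xi> r hdom x" and "tk \<in> hdom"
    obtain s' where "snd (x (0, 0)) + 1 \<le> s'"
      and "s' + length (sync_string E r i) \<le> snd (x (0, 0)) + 1 + n"
      and "occurs_at \<xi> (sync_string E r i) s'"
      using window[of "snd (x (0, 0)) + 1"] by auto
    then have s': "snd (x (0, 0)) < s'" "s' - snd (x (0, 0)) - 1 + length (sync_string E r i) \<le> n"
      "occurs_at \<xi> (sync_string E r i) s'"
      by linarith+
    obtain t k where tk: "tk = (t, k)"
      by (cases tk)
    have "dist_A (x (t, k)) = 0" if "(real n + 1) * (Tp + 1) \<le> t + real k"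
    proof (rule dist_A_eq_0_after_occurrence[OF sol \<open>0 < Tp\<close> r root s'(3,1)])
      show "(t, k) \<in> hdom"
        using \<open>tk \<in> hdom\<close> tk by simp
      then show "s' - snd (x (0, 0)) - 1 + length (sync_string E r i) \<le> k"
        using solution_jump_count_ge[OF sol \<open>0 < Tp\<close> _ that] s'(2) by fastforce
    qed
    then show "case tk of (t, k) \<Rightarrow> (real n + 1) * (Tp + 1) \<le> t + real k \<longrightarrow> dist_A (x (t, k)) = 0"
      by (simp add: tk)
  qed
qed

theorem theorem2:
  fixes E :: "('n::finite \<times> 'n) set"
    and Tp :: real
    and r :: "real^'n"
    and \<xi> :: "nat \<Rightarrow> ('n \<times> 'n) set"
  assumes "simple_digraph E"
    and "rooted E"
    and "Tp > 0"
    and "\<forall>i. 0 < r $ i \<and> r $ i < 1"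
    and "in_Xi E \<xi>"
  shows "((\<exists>i. is_root E i \<and> contains_inf_often \<xi> (sync_string E r i))
            \<longrightarrow> UGS Tp \<xi> r \<and> GFTA Tp \<xi> r)
       \<and> ((\<exists>i. is_root E i \<and> contains_unif_inf_often \<xi> (sync_string E r i))
            \<longrightarrow> UGS Tp \<xi> r \<and> GFxTA Tp \<xi> r)"
  using UGS_if_Tp_pos[OF assms(3)] GFTA_if_contains_inf_often[OF assms(3,4)]
    GFxTA_if_contains_unif_inf_often[OF assms(3,4)]
  by blast

end
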